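(* Let $\mathcal D=\{(i_m,\mathbf X_m,S_m)\}_{m=1}^t$ with $S_m\subseteq[N]$ and features $\mathbf x_{mj}\in\mathbb R^d$, and let $\boldsymbol\theta^\star\in\mathbb R^d$. For any $\boldsymbol\theta\in\mathbb R^d$, with $\zeta_{\boldsymbol\theta}=3\sqrt2\max_{m\le t,j\in S_m}|\mathbf x_{mj}^\top(\boldsymbol\theta-\boldsymbol\theta^\star)|$ and $\varphi(\zeta)=\big(\frac{e^\zeta-1}\zeta-1\big)(1+\zeta)$, $$\frac1{1+2\varphi(\zeta_{\boldsymbol\theta})}\mathbf H(\boldsymbol\theta^\star)\preceq\mathbf H(\boldsymbol\theta)\preceq(1+2\varphi(\zeta_{\boldsymbol\theta}))\mathbf H(\boldsymbol\theta^\star).$$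
   Context: $q_{mj}(\boldsymbol\theta)=\exp(\mathbf x_{mj}^\top\boldsymbol\theta)/(1+\sum_{k\in S_m}\exp(\mathbf x_{mk}^\top\boldsymbol\theta))$ for $j\in S_m$. $\mathbf H(\boldsymbol\theta)=\sum_{m=1}^t\Big(\sum_{j\in S_m}q_{mj}(\boldsymbol\theta)\mathbf x_{mj}\mathbf x_{mj}^\top-\sum_{i\in S_m}\sum_{j\in S_m}q_{mi}(\boldsymbol\theta)q_{mj}(\boldsymbol\theta)\mathbf x_{mi}\mathbf x_{mj}^\top\Big)$, the Hessian of the MNL negative log-likelihood of $\mathcal D$. $\varphi(0)$ is understood as its limit $0$. *)

theory Defs
  imports "HOL-Analysis.Analysis"
begin

definition outer :: "real^'d \<Rightarrow> real^'d \<Rightarrow> real^'d^'d" where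
  "outer u v = (\<chi> i j. u $ i * v $ j)"

definition mnl_q :: "(nat \<Rightarrow> nat set) \<Rightarrow> (nat \<Rightarrow> nat \<Rightarrow> real^'d) \<Rightarrow> real^'d \<Rightarrow> nat \<Rightarrow> nat \<Rightarrow> real" where
  "mnl_q S x \<theta> m j = exp (x m j \<bullet> \<theta>) / (1 + (\<Sum>k\<in>S m. exp (x m k \<bullet> \<theta>)))"

text \<open>Hessian of the MNL negative log-likelihood of the data set (rounds m = 1..t).\<close>
definition mnl_H :: "nat \<Rightarrow> (nat \<Rightarrow> nat set) \<Rightarrow> (nat \<Rightarrow> nat \<Rightarrow> real^'d) \<Rightarrow> real^'d \<Rightarrow> real^'d^'d" where
  "mnl_H t S x \<theta> = (\<Sum>m\<in>{1..t}.
      (\<Sum>j\<in>S m. mnl_q S x \<theta> m j *\<^sub>R outer (x m j) (x m j))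
    - (\<Sum>i\<in>S m. \<Sum>j\<in>S m. (mnl_q S x \<theta> m i * mnl_q S x \<theta> m j) *\<^sub>R outer (x m i) (x m j)))"

text \<open>phi(zeta) = ((e^zeta - 1)/zeta - 1)(1 + zeta), with phi(0) = 0 (its limit).\<close>
definition phi :: "real \<Rightarrow> real" where
  "phi z = (if z = 0 then 0 else ((exp z - 1) / z - 1) * (1 + z))"

text \<open>zeta_theta = 3 sqrt 2 max_{m \<le> t, j \<in> S_m} |x_mj^T (theta - theta*)|
  (the max over an empty index set is taken as 0).\<close>
definition zeta :: "nat \<Rightarrow> (nat \<Rightarrow> nat set) \<Rightarrow> (nat \<Rightarrow> nat \<Rightarrow> real^'d) \<Rightarrow> real^'d \<Rightarrow> real^'d \<Rightarrow> real" where
  "zeta t S x \<theta> \<theta>s = 3 * sqrt 2 *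
     Max (insert 0 {\<bar>x m j \<bullet> (\<theta> - \<theta>s)\<bar> | m j. m \<in> {1..t} \<and> j \<in> S m})"

definition loewner_le :: "real^'d^'d \<Rightarrow> real^'d^'d \<Rightarrow> bool" where
  "loewner_le A B \<longleftrightarrow> (\<forall>v. v \<bullet> (A *v v) \<le> v \<bullet> (B *v v))"

end

theory Submission
  imports Defs
begin

text \<open>For a round \<open>m\<close> and a direction \<open>v\<close>, \<open>v\<^sup>T H v\<close> contributes the variance of the
  random variable that equals \<open>v\<^sup>T x\<^sub>m\<^sub>j\<close> when item \<open>j\<close> is chosen and \<open>0\<close> when nothing is
  chosen, under the MNL probabilities with utilities \<open>x\<^sub>m\<^sub>j\<^sup>T \<theta>\<close>. Replacing \<open>\<theta>\<^sup>*\<close> by \<open>\<theta>\<close>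
  shifts every utility by at most \<open>M \<le> \<zeta>/2\<close>, so every choice probability, the outside
  option included, shrinks by at most the factor \<open>e\<^sup>-\<^sup>2\<^sup>M\<close>. As a variance is the minimum
  over \<open>c\<close> of the second moments about \<open>c\<close>, such a pointwise bound on the weights passes to
  the variance; this gives \<open>e\<^sup>-\<^sup>\<zeta> H(\<theta>\<^sup>*) \<preceq> H(\<theta>)\<close>, and symmetrically
  \<open>H(\<theta>) \<preceq> e\<^sup>\<zeta> H(\<theta>\<^sup>*)\<close>. It remains that \<open>e\<^sup>\<zeta> \<le> 1 + 2\<phi>(\<zeta>)\<close> for \<open>\<zeta> \<ge> 0\<close>.\<close>

definition quad_form :: "real^'n^'n \<Rightarrow> real^'n \<Rightarrow> real" where
  "quad_form A v = v \<bullet> (A *v v)"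

lemma linear_quad_form: "linear (\<lambda>A. quad_form A v)"
  by (rule linearI)
     (simp_all add: quad_form_def matrix_vector_mult_add_rdistrib
        scaleR_matrix_vector_assoc[symmetric] inner_add_right)

lemma quad_form_outer: "quad_form (outer a b) v = (v \<bullet> a) * (v \<bullet> b)"
  by (simp add: quad_form_def outer_def matrix_vector_mult_def inner_vec_def
      sum_distrib_left sum_product mult_ac)
     (subst sum.swap, simp add: mult_ac)

lemma quad_form_scaleR: "quad_form (c *\<^sub>R A) v = c * quad_form A v"
  by (simp add: linear_scale[OF linear_quad_form])

text \<open>Variance of a random variable that equals \<open>a j\<close> with probability \<open>q j\<close> for
  \<open>j \<in> S\<close> and \<open>0\<close> with the remaining probability \<open>1 - sum q S\<close>.\<close>
definition weighted_variance :: "('a \<Rightarrow> real) \<Rightarrow> 'a set \<Rightarrow> ('a \<Rightarrow> real) \<Rightarrow> real" where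
  "weighted_variance q S a = (\<Sum>j\<in>S. q j * (a j)\<^sup>2) - (\<Sum>j\<in>S. q j * a j)\<^sup>2"

lemma weighted_variance_decomposition:
  assumes "q0 + sum q S = 1"
  shows "q0 * m\<^sup>2 + (\<Sum>j\<in>S. q j * (a j - m)\<^sup>2)
       = weighted_variance q S a + (m - (\<Sum>j\<in>S. q j * a j))\<^sup>2"
proof -
  have "(\<Sum>j\<in>S. q j * (a j - m)\<^sup>2)
      = (\<Sum>j\<in>S. q j * (a j)\<^sup>2) - 2 * m * (\<Sum>j\<in>S. q j * a j) + m\<^sup>2 * sum q S"
    by (simp add: power2_eq_square algebra_simps sum.distrib sum_subtractf sum_distrib_left)
  moreover have "sum q S = 1 - q0"
    using assms by simp
  ultimately show ?thesis
    by (simp add: weighted_variance_def power2_eq_square algebra_simps)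
qed

lemma weighted_variance_le_centered_moment:
  assumes "q0 + sum q S = 1"
  shows "weighted_variance q S a \<le> q0 * m\<^sup>2 + (\<Sum>j\<in>S. q j * (a j - m)\<^sup>2)"
  using weighted_variance_decomposition[OF assms] by simp

lemma weighted_variance_nonneg:
  assumes "q0 + sum q S = 1" "0 \<le> q0" "\<forall>j\<in>S. 0 \<le> q j"
  shows "0 \<le> weighted_variance q S a"
proof -
  have "0 \<le> q0 * (\<Sum>j\<in>S. q j * a j)\<^sup>2 + (\<Sum>j\<in>S. q j * (a j - (\<Sum>j\<in>S. q j * a j))\<^sup>2)"
    using assms(2,3) by (intro add_nonneg_nonneg sum_nonneg) auto
  then show ?thesis
    using weighted_variance_decomposition[OF assms(1)] by simp
qed

lemma weighted_variance_mono:
  assumes q: "q0 + sum q S = 1" and p: "p0 + sum p S = 1" and "0 \<le> c"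
    and "c * q0 \<le> p0" and "\<forall>j\<in>S. c * q j \<le> p j"
  shows "c * weighted_variance q S a \<le> weighted_variance p S a"
proof -
  define m where "m = (\<Sum>j\<in>S. p j * a j)"
  have "c * weighted_variance q S a \<le> c * (q0 * m\<^sup>2 + (\<Sum>j\<in>S. q j * (a j - m)\<^sup>2))"
    using weighted_variance_le_centered_moment[OF q] \<open>0 \<le> c\<close> by (rule mult_left_mono)
  also have "\<dots> = (c * q0) * m\<^sup>2 + (\<Sum>j\<in>S. (c * q j) * (a j - m)\<^sup>2)"
    by (simp add: algebra_simps sum_distrib_left)
  also have "\<dots> \<le> p0 * m\<^sup>2 + (\<Sum>j\<in>S. p j * (a j - m)\<^sup>2)"
    using assms(4,5) by (intro add_mono mult_right_mono sum_mono) auto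
  also have "\<dots> = weighted_variance p S a"
    using weighted_variance_decomposition[OF p] by (simp add: m_def)
  finally show ?thesis .
qed

definition mnl_prob :: "('a \<Rightarrow> real) \<Rightarrow> 'a set \<Rightarrow> 'a \<Rightarrow> real" where
  "mnl_prob u S j = exp (u j) / (1 + (\<Sum>k\<in>S. exp (u k)))"

definition mnl_outside_prob :: "('a \<Rightarrow> real) \<Rightarrow> 'a set \<Rightarrow> real" where
  "mnl_outside_prob u S = 1 / (1 + (\<Sum>k\<in>S. exp (u k)))"

lemma mnl_denominator_pos: "0 < 1 + (\<Sum>k\<in>S. exp (u k :: real))"
  by (simp add: add_pos_nonneg sum_nonneg)

lemma mnl_prob_nonneg: "0 \<le> mnl_prob u S j"
  using mnl_denominator_pos[of u S] by (simp add: mnl_prob_def)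

lemma mnl_outside_prob_nonneg: "0 \<le> mnl_outside_prob u S"
  using mnl_denominator_pos[of u S] by (simp add: mnl_outside_prob_def)

lemma mnl_outside_prob_add_sum: "mnl_outside_prob u S + sum (mnl_prob u S) S = 1"
  using mnl_denominator_pos[of u S]
  by (simp add: mnl_outside_prob_def mnl_prob_def sum_divide_distrib[symmetric] field_simps)

lemma mnl_denominator_perturb:
  fixes u u' :: "'a \<Rightarrow> real"
  assumes "0 \<le> M" and "\<forall>j\<in>S. \<bar>u' j - u j\<bar> \<le> M"
  shows "1 + (\<Sum>k\<in>S. exp (u' k)) \<le> exp M * (1 + (\<Sum>k\<in>S. exp (u k)))"
proof -
  have "(\<Sum>k\<in>S. exp (u' k)) \<le> (\<Sum>k\<in>S. exp M * exp (u k))"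
    using assms(2) by (intro sum_mono) (auto simp: exp_add[symmetric])
  moreover have "1 \<le> exp M"
    using assms(1) by simp
  ultimately show ?thesis
    by (simp add: distrib_left sum_distrib_left add_mono)
qed

lemma mnl_prob_perturb:
  fixes u u' :: "'a \<Rightarrow> real"
  assumes "0 \<le> M" and gap: "\<forall>j\<in>S. \<bar>u' j - u j\<bar> \<le> M" and "j \<in> S"
  shows "exp (-2 * M) * mnl_prob u S j \<le> mnl_prob u' S j"
proof -
  have "exp (-2 * M) * mnl_prob u S j = exp (u j - M) / (exp M * (1 + (\<Sum>k\<in>S. exp (u k))))"
    by (simp add: mnl_prob_def exp_diff exp_minus field_simps flip: exp_add)
  also have "\<dots> \<le> mnl_prob u' S j"
    unfolding mnl_prob_def using gap \<open>j \<in> S\<close>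
    by (intro frac_le mnl_denominator_pos mnl_denominator_perturb[OF assms(1,2)]) auto
  finally show ?thesis .
qed

lemma mnl_outside_prob_perturb:
  fixes u u' :: "'a \<Rightarrow> real"
  assumes "0 \<le> M" and "\<forall>j\<in>S. \<bar>u' j - u j\<bar> \<le> M"
  shows "exp (- M) * mnl_outside_prob u S \<le> mnl_outside_prob u' S"
proof -
  have "exp (- M) * mnl_outside_prob u S = 1 / (exp M * (1 + (\<Sum>k\<in>S. exp (u k))))"
    by (simp add: mnl_outside_prob_def exp_minus divide_inverse)
  also have "\<dots> \<le> mnl_outside_prob u' S"
    unfolding mnl_outside_prob_def
    by (intro frac_le mnl_denominator_pos mnl_denominator_perturb[OF assms]) auto
  finally show ?thesis .
qed

lemma mnl_variance_perturb:
  fixes u u' :: "'a \<Rightarrow> real"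
  assumes "0 \<le> M" and "\<forall>j\<in>S. \<bar>u' j - u j\<bar> \<le> M"
  shows "exp (-2 * M) * weighted_variance (mnl_prob u S) S a
       \<le> weighted_variance (mnl_prob u' S) S a"
proof (rule weighted_variance_mono[OF mnl_outside_prob_add_sum mnl_outside_prob_add_sum])
  have "exp (-2 * M) * mnl_outside_prob u S \<le> exp (- M) * mnl_outside_prob u S"
    using assms(1) by (intro mult_right_mono mnl_outside_prob_nonneg) simp
  also have "\<dots> \<le> mnl_outside_prob u' S"
    using mnl_outside_prob_perturb[OF assms] .
  finally show "exp (-2 * M) * mnl_outside_prob u S \<le> mnl_outside_prob u' S" .
qed (use mnl_prob_perturb[OF assms] in auto)

lemma quad_form_mnl_H:
  "quad_form (mnl_H t S x \<theta>) v
     = (\<Sum>m\<in>{1..t}. weighted_variance (mnl_prob (\<lambda>j. x m j \<bullet> \<theta>) (S m)) (S m) (\<lambda>j. v \<bullet> x m j))"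
  unfolding mnl_H_def weighted_variance_def mnl_q_def mnl_prob_def[abs_def]
  by (simp add: linear_sum[OF linear_quad_form] linear_diff[OF linear_quad_form]
      linear_scale[OF linear_quad_form] quad_form_outer power2_eq_square sum_product algebra_simps)

lemma quad_form_mnl_H_nonneg: "0 \<le> quad_form (mnl_H t S x \<theta>) v"
  unfolding quad_form_mnl_H
  by (intro sum_nonneg weighted_variance_nonneg[OF mnl_outside_prob_add_sum]
      mnl_outside_prob_nonneg ballI mnl_prob_nonneg)

lemma zeta_commute: "zeta t S x \<theta>s \<theta> = zeta t S x \<theta> \<theta>s"
  unfolding zeta_def by (simp add: inner_diff_right abs_minus_commute)

lemma
  assumes "\<forall>m\<in>{1..t}. finite (S m)"
  shows zeta_nonneg: "0 \<le> zeta t S x \<theta> \<theta>s"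
    and inner_gap_le_zeta: "m \<in> {1..t} \<Longrightarrow> j \<in> S m
      \<Longrightarrow> 2 * \<bar>x m j \<bullet> \<theta> - x m j \<bullet> \<theta>s\<bar> \<le> zeta t S x \<theta> \<theta>s"
proof -
  let ?Z = "{\<bar>x m j \<bullet> (\<theta> - \<theta>s)\<bar> | m j. m \<in> {1..t} \<and> j \<in> S m}"
  have "?Z = (\<lambda>(m, j). \<bar>x m j \<bullet> (\<theta> - \<theta>s)\<bar>) ` (SIGMA m:{1..t}. S m)"
    by force
  then have fin: "finite ?Z"
    using assms by (auto intro!: finite_imageI finite_SigmaI)
  then show "0 \<le> zeta t S x \<theta> \<theta>s"
    unfolding zeta_def by simp
  assume "m \<in> {1..t}" "j \<in> S m"
  with fin have "\<bar>x m j \<bullet> (\<theta> - \<theta>s)\<bar> \<le> Max (insert 0 ?Z)"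
    by (intro Max_ge) auto
  moreover have "2 \<le> 3 * sqrt (2::real)"
    using real_sqrt_ge_one[of 2] by linarith
  ultimately show "2 * \<bar>x m j \<bullet> \<theta> - x m j \<bullet> \<theta>s\<bar> \<le> zeta t S x \<theta> \<theta>s"
    unfolding zeta_def inner_diff_right[symmetric]
    by (intro mult_mono) auto
qed

lemma quad_form_mnl_H_perturb:
  assumes "\<forall>m\<in>{1..t}. finite (S m)"
  shows "exp (- zeta t S x \<theta> \<theta>s) * quad_form (mnl_H t S x \<theta>s) v \<le> quad_form (mnl_H t S x \<theta>) v"
proof -
  let ?z = "zeta t S x \<theta> \<theta>s"
  have "exp (- ?z) * weighted_variance (mnl_prob (\<lambda>j. x m j \<bullet> \<theta>s) (S m)) (S m) (\<lambda>j. v \<bullet> x m j)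
      \<le> weighted_variance (mnl_prob (\<lambda>j. x m j \<bullet> \<theta>) (S m)) (S m) (\<lambda>j. v \<bullet> x m j)"
    if "m \<in> {1..t}" for m
  proof -
    have "0 \<le> ?z / 2"
      using zeta_nonneg[OF assms] by simp
    moreover have "\<forall>j\<in>S m. \<bar>x m j \<bullet> \<theta> - x m j \<bullet> \<theta>s\<bar> \<le> ?z / 2"
    proof
      fix j
      assume "j \<in> S m"
      then have "2 * \<bar>x m j \<bullet> \<theta> - x m j \<bullet> \<theta>s\<bar> \<le> ?z"
        by (rule inner_gap_le_zeta[OF assms that])
      then show "\<bar>x m j \<bullet> \<theta> - x m j \<bullet> \<theta>s\<bar> \<le> ?z / 2"
        by simp
    qed
    ultimately have "exp (-2 * (?z / 2))
        * weighted_variance (mnl_prob (\<lambda>j. x m j \<bullet> \<theta>s) (S m)) (S m) (\<lambda>j. v \<bullet> x m j)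
      \<le> weighted_variance (mnl_prob (\<lambda>j. x m j \<bullet> \<theta>) (S m)) (S m) (\<lambda>j. v \<bullet> x m j)"
      by (rule mnl_variance_perturb)
    then show ?thesis
      by simp
  qed
  then show ?thesis
    unfolding quad_form_mnl_H sum_distrib_left by (rule sum_mono)
qed

lemma quad_form_mnl_H_le:
  assumes "\<forall>m\<in>{1..t}. finite (S m)"
  shows "quad_form (mnl_H t S x \<theta>) v \<le> exp (zeta t S x \<theta> \<theta>s) * quad_form (mnl_H t S x \<theta>s) v"
proof -
  let ?z = "zeta t S x \<theta> \<theta>s"
  have "quad_form (mnl_H t S x \<theta>) v = exp ?z * (exp (- ?z) * quad_form (mnl_H t S x \<theta>) v)"
    by (simp add: exp_minus)
  also have "\<dots> \<le> exp ?z * quad_form (mnl_H t S x \<theta>s) v"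
    using quad_form_mnl_H_perturb[OF assms, where \<theta> = \<theta>s and \<theta>s = \<theta>]
    unfolding zeta_commute[where \<theta> = \<theta> and \<theta>s = \<theta>s] by (rule mult_left_mono) simp
  finally show ?thesis .
qed

lemma exp_le_one_plus_two_phi:
  assumes "0 \<le> z"
  shows "exp z \<le> 1 + 2 * phi z"
proof (cases "z = 0")
  case True
  then show ?thesis by (simp add: phi_def)
next
  case False
  with assms have "0 < z" by simp
  have "2 + 3 * z + 2 * z\<^sup>2 \<le> 2 + 3 * z + 2 * z\<^sup>2 + z ^ 3 / 2"
    using \<open>0 < z\<close> by (simp add: zero_le_power)
  also have "\<dots> = (2 + z) * (1 + z + z\<^sup>2 / 2)"
    by (simp add: power2_eq_square power3_eq_cube algebra_simps)
  also have "\<dots> \<le> (2 + z) * exp z"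
    using exp_lower_Taylor_quadratic[OF assms] assms by (intro mult_left_mono) auto
  finally have "z * exp z \<le> z + 2 * (exp z - 1 - z) * (1 + z)"
    by (simp add: power2_eq_square algebra_simps)
  then have "exp z \<le> (z + 2 * (exp z - 1 - z) * (1 + z)) / z"
    using \<open>0 < z\<close> by (simp add: le_divide_eq mult.commute)
  also have "\<dots> = 1 + 2 * phi z"
    using \<open>0 < z\<close> by (simp add: phi_def field_simps)
  finally show ?thesis .
qed

theorem propositionB1:
  fixes t N :: nat and S :: "nat \<Rightarrow> nat set" and x :: "nat \<Rightarrow> nat \<Rightarrow> real^'d"
    and \<theta>s \<theta> :: "real^'d"
  assumes "\<forall>m\<in>{1..t}. S m \<subseteq> {1..N}"
  shows "loewner_le ((1 / (1 + 2 * phi (zeta t S x \<theta> \<theta>s))) *\<^sub>R mnl_H t S x \<theta>s) (mnl_H t S x \<theta>)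
       \<and> loewner_le (mnl_H t S x \<theta>) ((1 + 2 * phi (zeta t S x \<theta> \<theta>s)) *\<^sub>R mnl_H t S x \<theta>s)"
proof -
  have fin: "\<forall>m\<in>{1..t}. finite (S m)"
    using assms finite_subset[OF _ finite_atLeastAtMost] by blast
  define z where "z = zeta t S x \<theta> \<theta>s"
  have exp_le: "exp z \<le> 1 + 2 * phi z"
    unfolding z_def by (rule exp_le_one_plus_two_phi[OF zeta_nonneg[OF fin]])
  have "inverse (1 + 2 * phi z) \<le> inverse (exp z)"
    using exp_le by (rule le_imp_inverse_le) simp
  then have inv_le: "1 / (1 + 2 * phi z) \<le> exp (- z)"
    by (simp add: exp_minus divide_inverse)
  show ?thesis
    unfolding loewner_le_def quad_form_def[symmetric] z_def[symmetric] quad_form_scaleR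
  proof (intro conjI allI)
    fix v
    show "1 / (1 + 2 * phi z) * quad_form (mnl_H t S x \<theta>s) v \<le> quad_form (mnl_H t S x \<theta>) v"
      using mult_right_mono[OF inv_le quad_form_mnl_H_nonneg] quad_form_mnl_H_perturb[OF fin]
      unfolding z_def by (rule order_trans)
    show "quad_form (mnl_H t S x \<theta>) v \<le> (1 + 2 * phi z) * quad_form (mnl_H t S x \<theta>s) v"
      using quad_form_mnl_H_le[OF fin] mult_right_mono[OF exp_le quad_form_mnl_H_nonneg]
      unfolding z_def by (rule order_trans)
  qed
qed

end
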